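(* Let $T$ be a decomposition tree of a distance-hereditary graph $G$, and let $v$ be an internal node of $T$ with left child $v_l$ and right child $v_r$. If $v$ is labeled $\odot$, then $\hat\gamma_p(v)=\hat\gamma_p(v_l)+\hat\gamma_p(v_r)$; otherwise (i.e. $v$ is labeled $\otimes$ or $\oplus$), $\hat\gamma_p(v)=\hat\gamma_0(v)+2\cdot\hat{mty}_{pr}(v)$.
   Context: All graphs are finite, simple, undirected. For a graph $H$ and $S\subseteq V(H)$, $N_H[S]$ is $S$ together with all vertices adjacent to a vertex of $S$, and $H[S]$ is the induced subgraph. Graphs carry a "twin set": a single-vertex graph on $x$ has twin set $\{x\}$. For vertex-disjoint graphs $G_l,G_r$ with twin sets $TS(G_l),TS(G_r)$: the true twin operation $G_l\otimes G_r$ has vertex set $V(G_l)\cup V(G_r)$, edge set $E(G_l)\cup E(G_r)\cup\{uw: u\in TS(G_l), w\in TS(G_r)\}$ and twin set $TS(G_l)\cup TS(G_r)$; the false twin operation $G_l\odot G_r$ has vertex set $V(G_l)\cup V(G_r)$, edge set $E(G_l)\cup E(G_r)$ and twin set $TS(G_l)\cup TS(G_r)$; the attachment operation $G_l\oplus G_r$ has the same vertex and edge sets as $G_l\otimes G_r$ and twin set $TS(G_l)$. A decomposition tree $T$ of $G$ is a rooted binary tree whose leaves are in bijection with $V(G)$, each internal node having a left and a right child and a label in $\{\otimes,\odot,\oplus\}$; for each node $v$ define $\hat G(v)$ and $\hat{TS}(v)$ recursively: for a leaf $x$, the single-vertex graph on $x$ with twin set $\{x\}$; for an internal node $v$ with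 label $\circ$ and children $v_l,v_r$, $\hat G(v)=\hat G(v_l)\circ\hat G(v_r)$ with the corresponding twin set; and one requires $\hat G(\text{root})=G$. Then $\hat G(v)$ is the subgraph of $G$ induced by the set $\hat V(v)$ of leaves below $v$. (A graph is distance-hereditary iff it has a decomposition tree.) For a node $v$ and $0\le k\le|\hat{TS}(v)|$, call $S\subseteq\hat V(v)$ $k$-feasible if $\hat V(v)\setminus\hat{TS}(v)\subseteq N_{\hat G(v)}[S]$ and there is $X\subseteq S\cap\hat{TS}(v)$ with $|X|=k$ such that $\hat G(v)[S\setminus X]$ has a perfect matching. $\hat\gamma_k(v)$ is the minimum size of a $k$-feasible set and $\hat D_k(v)$ the family of $k$-feasible sets of that size. A paired-dominating set of a graph $H$ is a dominating set $D$ of $H$ such that $H[D]$ has a perfect matching; $\gamma_p(H)$ is the minimum size of a paired-dominating set of $H$ ($\infty$ if none exists). Set $\hat\gamma_p(v)=\gamma_p(\hat G(v))$, and let $\hat D_p(v)$ be the family of paired-dominating sets of $\hat G(v)$ of size $\hat\gamma_p(v)$. Define $\hat{mty}_{pr}(v)=1$ if $\hat D_p(v)\cap\hat D_0(v)=\emptyset$ and $\hat{mty}_{pr}(v)=0$ otherwise. *)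

theory Defs
  imports Main "HOL-Library.Extended_Nat"
begin

text \<open>Graphs: a vertex set V and an edge set E of 2-element subsets of V.\<close>

definition closed_nbhd :: "'a set \<Rightarrow> 'a set set \<Rightarrow> 'a set \<Rightarrow> 'a set" where
  "closed_nbhd V E S = S \<union> {u \<in> V. \<exists>w\<in>S. {u, w} \<in> E}"

definition has_perfect_matching :: "'a set set \<Rightarrow> 'a set \<Rightarrow> bool" where
  "has_perfect_matching E S \<longleftrightarrow>
     (\<exists>M. M \<subseteq> {e \<in> E. e \<subseteq> S} \<and> (\<forall>x\<in>S. \<exists>!e. e \<in> M \<and> x \<in> e))"

definition paired_dom_set :: "'a set \<Rightarrow> 'a set set \<Rightarrow> 'a set \<Rightarrow> bool" where
  "paired_dom_set V E D \<longleftrightarrow> D \<subseteq> V \<and> V \<subseteq> closed_nbhd V E D \<and> has_perfect_matching E D"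

definition gamma_pr :: "'a set \<Rightarrow> 'a set set \<Rightarrow> enat" where
  "gamma_pr V E = Inf {enat (card D) | D. paired_dom_set V E D}"

datatype label = TrueTwin | FalseTwin | Attach

datatype 'a dtree = Leaf 'a | Node label "'a dtree" "'a dtree"

fun tverts :: "'a dtree \<Rightarrow> 'a set" where
  "tverts (Leaf x) = {x}"
| "tverts (Node _ l r) = tverts l \<union> tverts r"

fun tts :: "'a dtree \<Rightarrow> 'a set" where
  "tts (Leaf x) = {x}"
| "tts (Node TrueTwin l r) = tts l \<union> tts r"
| "tts (Node FalseTwin l r) = tts l \<union> tts r"
| "tts (Node Attach l r) = tts l"

fun tedges :: "'a dtree \<Rightarrow> 'a set set" where
  "tedges (Leaf x) = {}"
| "tedges (Node TrueTwin l r) = tedges l \<union> tedges r \<union> {{u, w} | u w. u \<in> tts l \<and> w \<in> tts r}"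
| "tedges (Node FalseTwin l r) = tedges l \<union> tedges r"
| "tedges (Node Attach l r) = tedges l \<union> tedges r \<union> {{u, w} | u w. u \<in> tts l \<and> w \<in> tts r}"

fun wf_dtree :: "'a dtree \<Rightarrow> bool" where
  "wf_dtree (Leaf x) = True"
| "wf_dtree (Node _ l r) = (wf_dtree l \<and> wf_dtree r \<and> tverts l \<inter> tverts r = {})"

fun subtrees :: "'a dtree \<Rightarrow> 'a dtree set" where
  "subtrees (Leaf x) = {Leaf x}"
| "subtrees (Node c l r) = insert (Node c l r) (subtrees l \<union> subtrees r)"

definition is_decomp_tree :: "'a set \<Rightarrow> 'a set set \<Rightarrow> 'a dtree \<Rightarrow> bool" where
  "is_decomp_tree V E T \<longleftrightarrow> wf_dtree T \<and> tverts T = V \<and> tedges T = E"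

text \<open>Node quantities: the subtree rooted at v represents the node v.\<close>
definition gp_hat :: "'a dtree \<Rightarrow> enat" where
  "gp_hat v = gamma_pr (tverts v) (tedges v)"

definition k_feasible :: "nat \<Rightarrow> 'a dtree \<Rightarrow> 'a set \<Rightarrow> bool" where
  "k_feasible k v S \<longleftrightarrow> S \<subseteq> tverts v \<and>
     tverts v - tts v \<subseteq> closed_nbhd (tverts v) (tedges v) S \<and>
     (\<exists>X. X \<subseteq> S \<inter> tts v \<and> card X = k \<and> has_perfect_matching (tedges v) (S - X))"

definition gk_hat :: "nat \<Rightarrow> 'a dtree \<Rightarrow> enat" where
  "gk_hat k v = Inf {enat (card S) | S. k_feasible k v S}"

definition Dk_hat :: "nat \<Rightarrow> 'a dtree \<Rightarrow> 'a set set" where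
  "Dk_hat k v = {S. k_feasible k v S \<and> enat (card S) = gk_hat k v}"

definition Dp_hat :: "'a dtree \<Rightarrow> 'a set set" where
  "Dp_hat v = {D. paired_dom_set (tverts v) (tedges v) D \<and> enat (card D) = gp_hat v}"

definition mty_pr :: "'a dtree \<Rightarrow> nat" where
  "mty_pr v = (if Dp_hat v \<inter> Dk_hat 0 v = {} then 1 else 0)"

end

theory Submission
  imports Defs
begin

(* A false twin node is the disjoint union of its children, so paired-dominating sets split
   along the two sides. At a true twin or attachment node every twin vertex of the left child
   is adjacent to every twin vertex of the right child. Every paired-dominating set is
   0-feasible, and if a minimum 0-feasible set S leaves some twin vertex undominated, there is
   such an adjacent pair outside S; adding it as one more matching edge yields a
   paired-dominating set. As sets with a perfect matching have even size, the paired-domination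
   number is the minimum 0-feasible size or exceeds it by exactly 2, and the first case occurs
   iff some minimum paired-dominating set is a minimum 0-feasible set. *)

lemma Inf_enat_card_attained:
  assumes "Inf {enat (card D) | D. P D} \<noteq> \<infinity>"
  obtains D where "P D" "Inf {enat (card D) | D. P D} = enat (card D)"
proof -
  obtain D0 where "P D0"
    using assms by (force simp: top_enat_def)
  then show ?thesis
    using that wellorder_InfI[of "enat (card D0)" "{enat (card D) | D. P D}"] by blast
qed

lemma Inf_enat_card_lower: "P D \<Longrightarrow> Inf {enat (card D) | D. P D} \<le> enat (card D)"
  by (rule Inf_lower) blast

lemma Inf_card_even_subfamily:
  fixes P F :: "'a set \<Rightarrow> bool"
  defines "gP \<equiv> Inf {enat (card D) | D. P D}" and "gF \<equiv> Inf {enat (card S) | S. F S}"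
  assumes sub: "\<And>D. P D \<Longrightarrow> F D"
    and even: "\<And>S. F S \<Longrightarrow> even (card S)"
    and extend: "\<And>S. F S \<Longrightarrow> \<exists>D. P D \<and> card D \<le> card S + 2"
  shows "gP = gF + 2 * enat
    (if {D. P D \<and> enat (card D) = gP} \<inter> {S. F S \<and> enat (card S) = gF} = {} then 1 else 0)"
proof (cases "gF = \<infinity>")
  case True
  have "gF \<le> gP"
    unfolding gP_def gF_def by (rule Inf_superset_mono) (blast intro: sub)
  then show ?thesis
    using True by simp
next
  case False
  then obtain S where S: "F S" "gF = enat (card S)"
    unfolding gF_def by (rule Inf_enat_card_attained)
  obtain D0 where D0: "P D0" "card D0 \<le> card S + 2"
    using extend[OF S(1)] by blast
  have "gP \<noteq> \<infinity>"
    unfolding gP_def using Inf_enat_card_lower[of P, OF D0(1)] by (metis infinity_ileE)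
  then obtain D where D: "P D" "gP = enat (card D)"
    unfolding gP_def by (rule Inf_enat_card_attained)
  have "card D \<le> card D0"
    using Inf_enat_card_lower[of P, OF D0(1)] D(2) gP_def by simp
  moreover have "card S \<le> card D"
    using Inf_enat_card_lower[of F, OF sub[OF D(1)]] S(2) gF_def by simp
  moreover have "even (card D)" "even (card S)"
    using even sub D(1) S(1) by blast+
  ultimately have "card D = card S \<or> card D = card S + 2"
    using D0(2) by presburger
  show ?thesis
  proof (cases "{D. P D \<and> enat (card D) = gP} \<inter> {S. F S \<and> enat (card S) = gF} = {}")
    case True
    then have "card D \<noteq> card S"
      using D S sub by blast
    with \<open>card D = card S \<or> card D = card S + 2\<close> have "card D = card S + 2"
      by blast
    then show ?thesis
      using True D(2) S(2) by (simp add: numeral_eq_enat one_enat_def)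
  next
    case False
    then have "gP = gF"
      by auto
    then show ?thesis
      using False by (simp add: zero_enat_def[symmetric])
  qed
qed

lemma has_perfect_matching_even:
  assumes "has_perfect_matching E S" "finite S" "\<forall>e\<in>E. card e = 2"
  shows "even (card S)"
proof -
  obtain M where M: "M \<subseteq> {e \<in> E. e \<subseteq> S}" "\<forall>x\<in>S. \<exists>!e. e \<in> M \<and> x \<in> e"
    using assms(1) unfolding has_perfect_matching_def by blast
  have "S = \<Union>M"
    using M by blast
  moreover have "pairwise disjnt M"
    unfolding pairwise_def disjnt_def using M by blast
  ultimately have "card S = (\<Sum>e\<in>M. card e)"
    using card_Union_disjoint[of M] M(1) assms(2) finite_subset by blast
  also have "\<dots> = (\<Sum>e\<in>M. 2)"
    using M(1) assms(3) by (intro sum.cong) auto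
  finally show ?thesis
    by simp
qed

lemma has_perfect_matching_Un:
  assumes "has_perfect_matching E S" "has_perfect_matching E' S'" "S \<inter> S' = {}"
  shows "has_perfect_matching (E \<union> E') (S \<union> S')"
proof -
  obtain M where M: "M \<subseteq> {e \<in> E. e \<subseteq> S}" "\<forall>x\<in>S. \<exists>!e. e \<in> M \<and> x \<in> e"
    using assms(1) unfolding has_perfect_matching_def by blast
  obtain M' where M': "M' \<subseteq> {e \<in> E'. e \<subseteq> S'}" "\<forall>x\<in>S'. \<exists>!e. e \<in> M' \<and> x \<in> e"
    using assms(2) unfolding has_perfect_matching_def by blast
  have "M \<union> M' \<subseteq> {e \<in> E \<union> E'. e \<subseteq> S \<union> S'}"
    using M(1) M'(1) by blast
  moreover have "\<forall>x\<in>S \<union> S'. \<exists>!e. e \<in> M \<union> M' \<and> x \<in> e"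
  proof
    fix x assume "x \<in> S \<union> S'"
    then show "\<exists>!e. e \<in> M \<union> M' \<and> x \<in> e"
    proof
      assume "x \<in> S"
      then have "x \<notin> \<Union>M'"
        using M'(1) assms(3) by blast
      then show ?thesis
        using M(2) \<open>x \<in> S\<close> by blast
    next
      assume "x \<in> S'"
      then have "x \<notin> \<Union>M"
        using M(1) assms(3) by blast
      then show ?thesis
        using M'(2) \<open>x \<in> S'\<close> by blast
    qed
  qed
  ultimately show ?thesis
    unfolding has_perfect_matching_def by blast
qed

lemma has_perfect_matching_edge: "{a, b} \<in> E \<Longrightarrow> has_perfect_matching E {a, b}"
  unfolding has_perfect_matching_def by (intro exI[of _ "{{a, b}}"]) auto

lemma has_perfect_matching_restrict:
  assumes "has_perfect_matching (E \<union> E') D" "\<forall>e\<in>E. e \<subseteq> A" "\<forall>e\<in>E'. e \<inter> A = {}"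
  shows "has_perfect_matching E (D \<inter> A)"
proof -
  obtain M where M: "M \<subseteq> {e \<in> E \<union> E'. e \<subseteq> D}" "\<forall>x\<in>D. \<exists>!e. e \<in> M \<and> x \<in> e"
    using assms(1) unfolding has_perfect_matching_def by blast
  have "M \<inter> E \<subseteq> {e \<in> E. e \<subseteq> D \<inter> A}"
    using M(1) assms(2) by blast
  moreover have "\<forall>x\<in>D \<inter> A. \<exists>!e. e \<in> M \<inter> E \<and> x \<in> e"
  proof
    fix x assume x: "x \<in> D \<inter> A"
    then obtain e where e: "e \<in> M" "x \<in> e" and uniq: "\<And>e'. e' \<in> M \<Longrightarrow> x \<in> e' \<Longrightarrow> e' = e"
      using M(2) by blast
    have "e \<in> E"
      using e M(1) assms(3) x by blast
    then show "\<exists>!e. e \<in> M \<inter> E \<and> x \<in> e"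
      using e uniq by blast
  qed
  ultimately show ?thesis
    unfolding has_perfect_matching_def by blast
qed

lemma closed_nbhd_mono:
  "V \<subseteq> V' \<Longrightarrow> E \<subseteq> E' \<Longrightarrow> D \<subseteq> D' \<Longrightarrow> closed_nbhd V E D \<subseteq> closed_nbhd V' E' D'"
  unfolding closed_nbhd_def by blast

lemma paired_dom_set_Un:
  assumes "paired_dom_set V E D" "paired_dom_set V' E' D'" "V \<inter> V' = {}"
  shows "paired_dom_set (V \<union> V') (E \<union> E') (D \<union> D')"
proof -
  have D: "D \<subseteq> V" "V \<subseteq> closed_nbhd V E D" "has_perfect_matching E D"
    and D': "D' \<subseteq> V'" "V' \<subseteq> closed_nbhd V' E' D'" "has_perfect_matching E' D'"
    using assms(1,2) unfolding paired_dom_set_def by auto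
  have "closed_nbhd V E D \<union> closed_nbhd V' E' D' \<subseteq> closed_nbhd (V \<union> V') (E \<union> E') (D \<union> D')"
    by (intro Un_least closed_nbhd_mono) auto
  then have "V \<union> V' \<subseteq> closed_nbhd (V \<union> V') (E \<union> E') (D \<union> D')"
    using D(2) D'(2) by blast
  moreover have "has_perfect_matching (E \<union> E') (D \<union> D')"
    using D(1) D'(1) assms(3) by (intro has_perfect_matching_Un[OF D(3) D'(3)]) blast
  moreover have "D \<union> D' \<subseteq> V \<union> V'"
    using D(1) D'(1) by blast
  ultimately show ?thesis
    by (simp add: paired_dom_set_def)
qed

lemma paired_dom_set_restrict:
  assumes "paired_dom_set (V \<union> V') (E \<union> E') D" "V \<inter> V' = {}"
    and "\<forall>e\<in>E. e \<subseteq> V" "\<forall>e\<in>E'. e \<subseteq> V'"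
  shows "paired_dom_set V E (D \<inter> V)"
proof -
  have dom: "V \<union> V' \<subseteq> closed_nbhd (V \<union> V') (E \<union> E') D"
    and pm: "has_perfect_matching (E \<union> E') D"
    using assms(1) unfolding paired_dom_set_def by auto
  have E': "\<forall>e\<in>E'. e \<inter> V = {}"
    using assms(2,4) by blast
  have "V \<subseteq> closed_nbhd V E (D \<inter> V)"
  proof
    fix x assume x: "x \<in> V"
    then have "x \<in> D \<or> (\<exists>w\<in>D. {x, w} \<in> E \<union> E')"
      using dom unfolding closed_nbhd_def by auto
    then show "x \<in> closed_nbhd V E (D \<inter> V)"
    proof
      assume "x \<in> D"
      then show ?thesis
        using x unfolding closed_nbhd_def by simp
    next
      assume "\<exists>w\<in>D. {x, w} \<in> E \<union> E'"
      then obtain w where w: "w \<in> D" "{x, w} \<in> E \<union> E'"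
        by blast
      have "{x, w} \<notin> E'"
        using E' x by auto
      then have "{x, w} \<in> E"
        using w(2) by simp
      moreover have "w \<in> V"
        using calculation assms(3) by auto
      ultimately show ?thesis
        using x w(1) unfolding closed_nbhd_def by auto
    qed
  qed
  moreover have "has_perfect_matching E (D \<inter> V)"
    using pm assms(3) E' by (rule has_perfect_matching_restrict)
  ultimately show ?thesis
    by (simp add: paired_dom_set_def)
qed

lemma gamma_pr_le: "paired_dom_set V E D \<Longrightarrow> gamma_pr V E \<le> enat (card D)"
  unfolding gamma_pr_def by (rule Inf_enat_card_lower)

lemma gamma_pr_attained:
  assumes "gamma_pr V E \<noteq> \<infinity>"
  obtains D where "paired_dom_set V E D" "gamma_pr V E = enat (card D)"
  using assms unfolding gamma_pr_def by (rule Inf_enat_card_attained)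

definition finite_graph :: "'a set \<Rightarrow> 'a set set \<Rightarrow> bool" where
  "finite_graph V E \<longleftrightarrow> finite V \<and> (\<forall>e\<in>E. e \<subseteq> V \<and> card e = 2)"

lemma gamma_pr_disjoint_union:
  assumes "V \<inter> V' = {}" "finite_graph V E" "finite_graph V' E'"
  shows "gamma_pr (V \<union> V') (E \<union> E') = gamma_pr V E + gamma_pr V' E'"
proof (rule antisym)
  show "gamma_pr (V \<union> V') (E \<union> E') \<le> gamma_pr V E + gamma_pr V' E'"
  proof (cases "gamma_pr V E = \<infinity> \<or> gamma_pr V' E' = \<infinity>")
    case True
    then show ?thesis
      by auto
  next
    case False
    then have "gamma_pr V E \<noteq> \<infinity>" "gamma_pr V' E' \<noteq> \<infinity>"
      by auto
    obtain D where D: "paired_dom_set V E D" "gamma_pr V E = enat (card D)"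
      using gamma_pr_attained[OF \<open>gamma_pr V E \<noteq> \<infinity>\<close>] by blast
    obtain D' where D': "paired_dom_set V' E' D'" "gamma_pr V' E' = enat (card D')"
      using gamma_pr_attained[OF \<open>gamma_pr V' E' \<noteq> \<infinity>\<close>] by blast
    have "D \<subseteq> V" "D' \<subseteq> V'"
      using D(1) D'(1) unfolding paired_dom_set_def by auto
    then have "card (D \<union> D') = card D + card D'"
      using assms unfolding finite_graph_def
      by (intro card_Un_disjoint) (auto intro: finite_subset)
    then show ?thesis
      using gamma_pr_le[OF paired_dom_set_Un[OF D(1) D'(1) assms(1)]] D(2) D'(2) by simp
  qed
next
  have edges: "\<forall>e\<in>E. e \<subseteq> V" "\<forall>e\<in>E'. e \<subseteq> V'"
    using assms(2,3) unfolding finite_graph_def by auto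
  show "gamma_pr V E + gamma_pr V' E' \<le> gamma_pr (V \<union> V') (E \<union> E')"
    unfolding gamma_pr_def[of "V \<union> V'"]
  proof (rule Inf_greatest)
    fix k assume "k \<in> {enat (card D) |D. paired_dom_set (V \<union> V') (E \<union> E') D}"
    then obtain D where D: "paired_dom_set (V \<union> V') (E \<union> E') D" "k = enat (card D)"
      by blast
    have "paired_dom_set V E (D \<inter> V)"
      using paired_dom_set_restrict[OF D(1) assms(1) edges] .
    moreover have "paired_dom_set V' E' (D \<inter> V')"
      using paired_dom_set_restrict[of V' V E' E D] D(1) assms(1) edges
      by (simp add: Un_commute Int_commute)
    moreover have "card D = card (D \<inter> V) + card (D \<inter> V')"
    proof -
      have "D = (D \<inter> V) \<union> (D \<inter> V')"
        using D(1) unfolding paired_dom_set_def by blast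
      moreover have "card ((D \<inter> V) \<union> (D \<inter> V')) = card (D \<inter> V) + card (D \<inter> V')"
        using assms unfolding finite_graph_def by (intro card_Un_disjoint) auto
      ultimately show ?thesis
        by simp
    qed
    ultimately show "gamma_pr V E + gamma_pr V' E' \<le> k"
      using add_mono[OF gamma_pr_le gamma_pr_le] D(2) by (metis plus_enat_simps(1))
  qed
qed

lemma tts_subset_tverts: "tts t \<subseteq> tverts t"
  by (induction t rule: tts.induct) auto

lemma tts_nonempty: "tts t \<noteq> {}"
  by (induction t rule: tts.induct) auto

lemma tts_Node_subset: "tts (Node c l r) \<subseteq> tts l \<union> tts r"
  by (cases c) auto

lemma tedges_Node_join:
  "c \<noteq> FalseTwin \<Longrightarrow> u \<in> tts l \<Longrightarrow> w \<in> tts r \<Longrightarrow> {u, w} \<in> tedges (Node c l r)"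
  by (cases c) auto

lemma wf_dtree_subtree: "v \<in> subtrees t \<Longrightarrow> wf_dtree t \<Longrightarrow> wf_dtree v"
  by (induction t) auto

lemma wf_dtree_finite_graph: "wf_dtree t \<Longrightarrow> finite_graph (tverts t) (tedges t)"
proof (induction t)
  case (Leaf x)
  then show ?case
    by (simp add: finite_graph_def)
next
  case (Node c l r)
  then have l: "finite_graph (tverts l) (tedges l)" and r: "finite_graph (tverts r) (tedges r)"
    and disj: "tverts l \<inter> tverts r = {}"
    by auto
  have "e \<subseteq> tverts l \<union> tverts r \<and> card e = 2" if e: "e \<in> tedges (Node c l r)" for e
  proof -
    have "e \<in> tedges l \<or> e \<in> tedges r \<or> (\<exists>u\<in>tts l. \<exists>w\<in>tts r. e = {u, w})"
      using e by (cases c) auto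
    moreover have "{u, w} \<subseteq> tverts l \<union> tverts r \<and> card {u, w} = 2"
      if "u \<in> tts l" "w \<in> tts r" for u w
    proof -
      have "u \<in> tverts l" "w \<in> tverts r"
        using that tts_subset_tverts[of l] tts_subset_tverts[of r] by auto
      moreover have "u \<noteq> w"
        using calculation disj by blast
      ultimately show ?thesis
        by simp
    qed
    ultimately show ?thesis
      using l r unfolding finite_graph_def by blast
  qed
  then show ?case
    using l r unfolding finite_graph_def by simp
qed

lemma k_feasible_0_iff:
  assumes "finite (tverts v)"
  shows "k_feasible 0 v S \<longleftrightarrow> S \<subseteq> tverts v \<and>
    tverts v - tts v \<subseteq> closed_nbhd (tverts v) (tedges v) S \<and> has_perfect_matching (tedges v) S"
proof
  assume "k_feasible 0 v S"
  then obtain X where S: "S \<subseteq> tverts v" "tverts v - tts v \<subseteq> closed_nbhd (tverts v) (tedges v) S"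
    and X: "X \<subseteq> S" "card X = 0" "has_perfect_matching (tedges v) (S - X)"
    unfolding k_feasible_def by blast
  have "X = {}"
    using X(1,2) S(1) assms by (meson card_0_eq finite_subset)
  then show "S \<subseteq> tverts v \<and> tverts v - tts v \<subseteq> closed_nbhd (tverts v) (tedges v) S \<and>
    has_perfect_matching (tedges v) S"
    using S X(3) by simp
next
  assume "S \<subseteq> tverts v \<and> tverts v - tts v \<subseteq> closed_nbhd (tverts v) (tedges v) S \<and>
    has_perfect_matching (tedges v) S"
  then show "k_feasible 0 v S"
    unfolding k_feasible_def by (intro conjI exI[of _ "{}"]) auto
qed

lemma paired_dom_set_k_feasible_0:
  "paired_dom_set (tverts v) (tedges v) D \<Longrightarrow> k_feasible 0 v D"
  unfolding paired_dom_set_def k_feasible_def by (auto intro!: exI[of _ "{}"])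

lemma k_feasible_0_even:
  assumes "wf_dtree v" "k_feasible 0 v S"
  shows "even (card S)"
proof -
  have G: "finite_graph (tverts v) (tedges v)"
    using assms(1) by (rule wf_dtree_finite_graph)
  then have "S \<subseteq> tverts v" "has_perfect_matching (tedges v) S"
    using assms(2) k_feasible_0_iff unfolding finite_graph_def by blast+
  then show ?thesis
    using G has_perfect_matching_even finite_subset unfolding finite_graph_def by blast
qed

lemma k_feasible_0_extend:
  assumes wf: "wf_dtree (Node c l r)" and c: "c \<noteq> FalseTwin"
    and S: "k_feasible 0 (Node c l r) S"
  shows "\<exists>D. paired_dom_set (tverts (Node c l r)) (tedges (Node c l r)) D \<and> card D \<le> card S + 2"
proof -
  let ?V = "tverts (Node c l r)" and ?E = "tedges (Node c l r)"
  have "finite ?V"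
    using wf_dtree_finite_graph[OF wf] unfolding finite_graph_def by simp
  then have S_sub: "S \<subseteq> ?V" and S_dom: "?V - tts (Node c l r) \<subseteq> closed_nbhd ?V ?E S"
    and S_pm: "has_perfect_matching ?E S"
    using S by (simp_all only: k_feasible_0_iff)
  have join: "{u, w} \<in> ?E" if "u \<in> tts l" "w \<in> tts r" for u w
    using tedges_Node_join[OF c that] .
  show ?thesis
  proof (cases "?V \<subseteq> closed_nbhd ?V ?E S")
    case True
    with S_sub S_pm show ?thesis
      by (intro exI[of _ S]) (simp add: paired_dom_set_def)
  next
    case False
    then obtain x where x: "x \<in> ?V" "x \<notin> closed_nbhd ?V ?E S"
      by blast
    then have "x \<notin> S" and far: "\<And>w. w \<in> S \<Longrightarrow> {x, w} \<notin> ?E"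
      unfolding closed_nbhd_def by auto
    have "x \<in> tts (Node c l r)"
      using x S_dom by blast
    then have "x \<in> tts l \<or> x \<in> tts r"
      using tts_Node_subset[of c l r] by blast
    \<comment> \<open>an undominated twin vertex is adjacent to all twin vertices of the other child\<close>
    then obtain a b where ab: "a \<in> tts l" "b \<in> tts r" "a \<notin> S" "b \<notin> S"
    proof
      assume "x \<in> tts l"
      moreover obtain b where "b \<in> tts r"
        using tts_nonempty[of r] by blast
      moreover have "b \<notin> S"
        using far join[OF \<open>x \<in> tts l\<close> \<open>b \<in> tts r\<close>] by blast
      ultimately show thesis
        using that \<open>x \<notin> S\<close> by blast
    next
      assume "x \<in> tts r"
      moreover obtain a where "a \<in> tts l"
        using tts_nonempty[of l] by blast
      moreover have "a \<notin> S"
        using far join[OF \<open>a \<in> tts l\<close> \<open>x \<in> tts r\<close>] by (auto simp: insert_commute)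
      ultimately show thesis
        using that \<open>x \<notin> S\<close> by blast
    qed
    let ?D = "{a, b} \<union> S"
    have "has_perfect_matching (?E \<union> ?E) ?D"
      using ab by (intro has_perfect_matching_Un has_perfect_matching_edge join S_pm) auto
    moreover have "?V \<subseteq> closed_nbhd ?V ?E ?D"
    proof
      fix y assume y: "y \<in> ?V"
      have "closed_nbhd ?V ?E S \<subseteq> closed_nbhd ?V ?E ?D"
        by (rule closed_nbhd_mono) auto
      moreover have "y \<in> closed_nbhd ?V ?E ?D" if "y \<in> tts l \<union> tts r"
      proof -
        have "{y, b} \<in> ?E \<or> {y, a} \<in> ?E"
          using that join[of y b] join[of a y] ab(1,2) by (auto simp: insert_commute)
        then show ?thesis
          using y unfolding closed_nbhd_def by blast
      qed
      ultimately show "y \<in> closed_nbhd ?V ?E ?D"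
        using y S_dom tts_Node_subset[of c l r] by blast
    qed
    moreover have "?D \<subseteq> ?V"
      using ab S_sub tts_subset_tverts[of l] tts_subset_tverts[of r] by auto
    moreover have "card ?D \<le> card S + 2"
    proof -
      have "card {a, b} \<le> 2"
        by (cases "a = b") auto
      then show ?thesis
        using card_Un_le[of "{a, b}" S] by linarith
    qed
    ultimately show ?thesis
      by (intro exI[of _ ?D]) (simp add: paired_dom_set_def)
  qed
qed

theorem lemma2:
  fixes V :: "'a set" and E :: "'a set set" and T v vl vr :: "'a dtree" and c :: label
  assumes "is_decomp_tree V E T"
    and "v \<in> subtrees T"
    and "v = Node c vl vr"
  shows "(c = FalseTwin \<longrightarrow> gp_hat v = gp_hat vl + gp_hat vr) \<and>
         (c \<noteq> FalseTwin \<longrightarrow> gp_hat v = gk_hat 0 v + 2 * enat (mty_pr v))"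
proof (intro conjI impI)
  have wf: "wf_dtree v"
    using assms(1,2) wf_dtree_subtree unfolding is_decomp_tree_def by blast
  then have children: "wf_dtree vl" "wf_dtree vr" "tverts vl \<inter> tverts vr = {}"
    using assms(3) by auto
  show "gp_hat v = gp_hat vl + gp_hat vr" if "c = FalseTwin"
    using gamma_pr_disjoint_union[OF children(3) wf_dtree_finite_graph wf_dtree_finite_graph]
      children that assms(3) unfolding gp_hat_def by simp
  show "gp_hat v = gk_hat 0 v + 2 * enat (mty_pr v)" if "c \<noteq> FalseTwin"
    unfolding gp_hat_def gk_hat_def mty_pr_def Dp_hat_def Dk_hat_def gamma_pr_def
  proof (rule Inf_card_even_subfamily)
    show "\<And>D. paired_dom_set (tverts v) (tedges v) D \<Longrightarrow> k_feasible 0 v D"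
      by (rule paired_dom_set_k_feasible_0)
    show "\<And>S. k_feasible 0 v S \<Longrightarrow> even (card S)"
      using wf by (rule k_feasible_0_even)
    show "\<And>S. k_feasible 0 v S \<Longrightarrow>
        \<exists>D. paired_dom_set (tverts v) (tedges v) D \<and> card D \<le> card S + 2"
      using k_feasible_0_extend wf that assms(3) by blast
  qed
qed

end
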